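(* Consider the drop-and-shuffle Markov chain $\mathcal{M}$ described in the context (with $\bot$ absorbing), with parameters $r\ge1$ and $p_d\in(1-\frac{1}{\sqrt r},1]$. Then the mean hitting time $m_\varepsilon(\bot)$ (the expected number of states visited from $\varepsilon$ before reaching $\bot$) is finite and $$m_\varepsilon(\bot)=\frac{1+2(1-p_d)}{1-r(1-p_d)^2}.$$ Moreover, $m_s(\mathrm{Pop}(s))=m_\varepsilon(\bot)$ for every recursive sub-tree root $s$.
   Context: Fix an integer $r\ge1$ and a drop probability $p_d\in[0,1]$. Let $S_{\mathrm{Sel}}=\{[\,],\ [H|T],\ [\,][H|T],\ [H|T][\,]\}$ (four formal symbols) and let $S_{\mathrm{Com}}$ be the set of nonempty tuples $(y_1,\ldots,y_l)$, $1\le l\le r$, of pairwise distinct elements of $\{1,\ldots,r\}$. Pairs in $S_{\mathrm{Sel}}\times S_{\mathrm{Com}}$ are written $\langle x,y\rangle$. Let $W=(S_{\mathrm{Sel}}\times S_{\mathrm{Com}})^*$ be the set of finite words of such pairs, including the empty word $\varepsilon$. The state space is $W\cup\{w\cdot x: w\in W,\ x\in S_{\mathrm{Sel}}\}\cup\{\bot\}$, the initial state is $\varepsilon$. Define $\mathrm{Pop}$ recursively by $\mathrm{Pop}(\varepsilon)=\bot$, $\mathrm{Pop}(w\cdot[\,][H|T])=w\cdot[H|T]$, $\mathrm{Pop}(w\cdot[H|T][\,])=w\cdot[\,]$, $\mathrm{Pop}(w\cdot[\,])=\mathrm{Pop}(w)$, $\mathrm{Pop}(w\cdot[H|T])=\mathrm{Pop}(w)$,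 $\mathrm{Pop}(w\cdot\langle x,(y_1)\rangle)=\mathrm{Pop}(w\cdot x)$, and $\mathrm{Pop}(w\cdot\langle x,(y_1,y_2,\ldots,y_l)\rangle)=w\cdot\langle x,(y_2,\ldots,y_l)\rangle$ for $l\ge2$. Transition probabilities, for $w\in W$ (unlisted ones are $0$): from $w$, go to $w\cdot[H|T][\,]$ and to $w\cdot[\,][H|T]$ each with probability $(1-p_d)^2/2$, to $w\cdot[\,]$ and to $w\cdot[H|T]$ each with probability $p_d(1-p_d)$, and to $\mathrm{Pop}(w)$ with probability $p_d^2$; from $w\cdot x$ with $x\in\{[H|T],[H|T][\,]\}$, go to $w\cdot\langle x,(y_1,\ldots,y_l)\rangle$ with probability $p_d^{r-l}(1-p_d)^l/l!$ for each $(y_1,\ldots,y_l)\in S_{\mathrm{Com}}$, and to $\mathrm{Pop}(w\cdot x)$ with probability $p_d^r$; from $w\cdot x$ with $x\in\{[\,],[\,][H|T]\}$, go to $\mathrm{Pop}(w\cdot x)$ with probability $1$; and $p(\bot,\bot)=1$. (This models SLD resolution of a test-generating Prolog program in which, at each resolution step, each matching clause is independently dropped with probability $p_d$ and the remaining ones are uniformly shuffled.) A recursive sub-tree root is a state in $W\setminus\{\varepsilon\}$, i.e. of the form $w\cdot\langle x,y\rangle$. For states $a$ and $b$, $m_a(b)\in[0,\infty]$ is the expected value of $\inf\{n\ge0: X_n=b\}$ for the chain started at $X_0=a$. *)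

theory Defs
  imports "HOL-Probability.Probability"
begin

text \<open>Selection symbols: SNil = [], SHT = [H|T], SNilHT = [][H|T], SHTNil = [H|T][].\<close>
datatype sel = SNil | SHT | SNilHT | SHTNil

text \<open>A word w in W is stored as a list of pairs (x, y) in REVERSED order:
  the head of the list is the LAST (most recently appended) pair.\<close>
datatype state = Word "(sel \<times> nat list) list" | Partial "(sel \<times> nat list) list" sel | Bot

definition eps :: state where "eps = Word []"

definition valid_com :: "nat \<Rightarrow> nat list \<Rightarrow> bool" where
  "valid_com r y \<longleftrightarrow> y \<noteq> [] \<and> distinct y \<and> set y \<subseteq> {1..r}"

definition in_W :: "nat \<Rightarrow> (sel \<times> nat list) list \<Rightarrow> bool" where
  "in_W r w \<longleftrightarrow> (\<forall>(x, y) \<in> set w. valid_com r y)"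

text \<open>Pop on words (argument reversed, head = last pair).  The case of an empty
  tuple is outside W and is given an arbitrary value.\<close>
fun pop_word :: "(sel \<times> nat list) list \<Rightarrow> state" where
  "pop_word [] = Bot"
| "pop_word ((x, []) # w) = Bot"
| "pop_word ((x, [y1]) # w) =
     (case x of SNilHT \<Rightarrow> Partial w SHT
              | SHTNil \<Rightarrow> Partial w SNil
              | SNil \<Rightarrow> pop_word w
              | SHT \<Rightarrow> pop_word w)"
| "pop_word ((x, y1 # y2 # ys) # w) = Word ((x, y2 # ys) # w)"

fun Pop :: "state \<Rightarrow> state" where
  "Pop (Word w) = pop_word w"
| "Pop (Partial w SNilHT) = Partial w SHT"
| "Pop (Partial w SHTNil) = Partial w SNil"
| "Pop (Partial w SNil) = pop_word w"
| "Pop (Partial w SHT) = pop_word w"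
| "Pop Bot = Bot"

text \<open>Transition probability p(s, s') (contributions of coinciding targets are added).\<close>
fun trans_prob :: "nat \<Rightarrow> real \<Rightarrow> state \<Rightarrow> state \<Rightarrow> real" where
  "trans_prob r pd (Word w) s' =
     (if s' = Partial w SHTNil then (1 - pd)^2 / 2 else 0)
   + (if s' = Partial w SNilHT then (1 - pd)^2 / 2 else 0)
   + (if s' = Partial w SNil then pd * (1 - pd) else 0)
   + (if s' = Partial w SHT then pd * (1 - pd) else 0)
   + (if s' = pop_word w then pd^2 else 0)"
| "trans_prob r pd (Partial w x) s' =
     (if x = SHT \<or> x = SHTNil then
        (case s' of
           Word ((x', y) # w') \<Rightarrow>
             (if x' = x \<and> w' = w \<and> valid_com r y
              then pd ^ (r - length y) * (1 - pd) ^ length y / fact (length y) else 0)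
         | _ \<Rightarrow> 0)
        + (if s' = Pop (Partial w x) then pd ^ r else 0)
      else (if s' = Pop (Partial w x) then 1 else 0))"
| "trans_prob r pd Bot s' = (if s' = Bot then 1 else 0)"

definition K :: "nat \<Rightarrow> real \<Rightarrow> state \<Rightarrow> state pmf" where
  "K r pd s = embed_pmf (trans_prob r pd s)"

definition stop_step :: "nat \<Rightarrow> real \<Rightarrow> state \<Rightarrow> state \<Rightarrow> state pmf" where
  "stop_step r pd b x = (if x = b then return_pmf b else K r pd x)"

fun stopped_walk :: "nat \<Rightarrow> real \<Rightarrow> state \<Rightarrow> state \<Rightarrow> nat \<Rightarrow> state pmf" where
  "stopped_walk r pd b a 0 = return_pmf a"
| "stopped_walk r pd b a (Suc n) = stopped_walk r pd b a n \<bind> stop_step r pd b"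

text \<open>Mean hitting time m_a(b) = E[T_b] for T_b = inf {n \<ge> 0. X_n = b}, X_0 = a,
  via the tail-sum formula E[T] = sum_{n \<ge> 0} P(T > n); here P(T > n) is the
  probability that the chain stopped at b is not at b at time n.\<close>
definition mean_hit :: "nat \<Rightarrow> real \<Rightarrow> state \<Rightarrow> state \<Rightarrow> ennreal" where
  "mean_hit r pd a b =
     (\<Sum>n. ennreal (measure_pmf.prob (stopped_walk r pd b a n) (UNIV - {b})))"

text \<open>Recursive sub-tree roots: states of W \ {eps}.\<close>
definition rec_root :: "nat \<Rightarrow> state \<Rightarrow> bool" where
  "rec_root r s \<longleftrightarrow> (\<exists>x y w. s = Word ((x, y) # w) \<and> in_W r ((x, y) # w))"

end

theory Submission
  imports Defs
begin

text \<open>Starting from a word u, the chain explores sub-trees pushed above u until it reaches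
  pop_word u; by self-similarity the mean duration m of such an excursion does not depend on u.
  A sub-tree root spends on average 2(1 - pd) steps in partial selection states and spawns on
  average r(1 - pd)^2 recursive sub-trees, so m = 1 + 2(1 - pd) + r(1 - pd)^2 m, which has
  a nonnegative solution exactly when r(1 - pd)^2 < 1, i.e. pd > 1 - 1/sqrt r.

  To make this rigorous we write down the expected remaining time G of an excursion as an explicit
  potential and check that E[G(next state)] = G - 1 off the target, with bounded jumps. For a
  nonnegative potential vanishing at the target, the partial sums of P(T > n) are bounded by G by
  induction on n. The converse inequality comes from the same induction applied to the bounded
  subsolution G - e (G + c)^2, whose boundedness replaces the missing uniform integrability of G
  along the chain.\<close>

section \<open>Mean hitting times of stopped chains\<close>

fun stopped_chain :: "('a \<Rightarrow> 'a pmf) \<Rightarrow> 'a \<Rightarrow> 'a \<Rightarrow> nat \<Rightarrow> 'a pmf" where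
  "stopped_chain P b a 0 = return_pmf a"
| "stopped_chain P b a (Suc n) = stopped_chain P b a n \<bind> (\<lambda>x. if x = b then return_pmf b else P x)"

definition survival :: "('a \<Rightarrow> 'a pmf) \<Rightarrow> 'a \<Rightarrow> 'a \<Rightarrow> nat \<Rightarrow> real" where
  "survival P b a n = measure_pmf.prob (stopped_chain P b a n) (UNIV - {b})"

definition poisson_at :: "('a \<Rightarrow> 'a pmf) \<Rightarrow> 'a set \<Rightarrow> ('a \<Rightarrow> real) \<Rightarrow> real \<Rightarrow> 'a \<Rightarrow> bool" where
  "poisson_at P S G B a \<longleftrightarrow> finite (set_pmf (P a)) \<and> set_pmf (P a) \<subseteq> S
     \<and> measure_pmf.expectation (P a) G = G a - 1
     \<and> (\<forall>x\<in>set_pmf (P a). \<bar>G x - G a\<bar> \<le> B)"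

lemma stopped_chain_Suc_first_step:
  "stopped_chain P b a (Suc n) =
     (if a = b then return_pmf b else P a) \<bind> (\<lambda>x. stopped_chain P b x n)"
proof (induction n)
  case 0
  show ?case by (simp add: bind_return_pmf bind_return_pmf')
next
  case (Suc n)
  then show ?case by (simp only: stopped_chain.simps(2) bind_assoc_pmf)
qed

lemma stopped_chain_target: "stopped_chain P b b n = return_pmf b"
  by (induction n) (auto simp: bind_return_pmf)

lemma survival_nonneg: "0 \<le> survival P b a n"
  by (simp add: survival_def)

lemma survival_target [simp]: "survival P b b n = 0"
  by (simp add: survival_def stopped_chain_target)

lemma survival_0: "a \<noteq> b \<Longrightarrow> survival P b a 0 = 1"
  by (simp add: survival_def)

lemma prob_bind_pmf:
  "measure_pmf.prob (bind_pmf M N) X = measure_pmf.expectation M (\<lambda>x. measure_pmf.prob (N x) X)"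
  by (simp add: measure_pmf_bind measure_pmf.measure_bind[where N="count_space UNIV"] measure_subprob)

lemma survival_Suc:
  "a \<noteq> b \<Longrightarrow> survival P b a (Suc n) = measure_pmf.expectation (P a) (\<lambda>x. survival P b x n)"
  by (simp only: survival_def stopped_chain_Suc_first_step prob_bind_pmf) simp

lemma survival_sum_Suc:
  assumes "a \<noteq> b" and "finite (set_pmf (P a))"
  shows "(\<Sum>k<Suc n. survival P b a k) = 1 + measure_pmf.expectation (P a) (\<lambda>x. \<Sum>k<n. survival P b x k)"
  using assms
  by (simp add: sum.lessThan_Suc_shift survival_0 survival_Suc integrable_measure_pmf_finite
      del: sum.lessThan_Suc)

lemma survival_sum_le_supersolution:
  assumes closed: "\<And>a. a \<in> S \<Longrightarrow> a \<noteq> b \<Longrightarrow> finite (set_pmf (P a)) \<and> set_pmf (P a) \<subseteq> S"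
    and nonneg: "\<And>a. a \<in> S \<Longrightarrow> 0 \<le> G a"
    and super: "\<And>a. a \<in> S \<Longrightarrow> a \<noteq> b \<Longrightarrow> 1 + measure_pmf.expectation (P a) G \<le> G a"
    and "a \<in> S"
  shows "(\<Sum>k<n. survival P b a k) \<le> G a"
  using \<open>a \<in> S\<close>
proof (induction n arbitrary: a)
  case 0
  then show ?case using nonneg by simp
next
  case (Suc n a)
  show ?case
  proof (cases "a = b")
    case True
    then show ?thesis using nonneg Suc.prems by simp
  next
    case False
    with closed Suc.prems have fin: "finite (set_pmf (P a))" and sub: "set_pmf (P a) \<subseteq> S"
      by blast+
    have "(\<Sum>k<Suc n. survival P b a k) = 1 + measure_pmf.expectation (P a) (\<lambda>x. \<Sum>k<n. survival P b x k)"
      using False fin by (rule survival_sum_Suc)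
    also have "\<dots> \<le> 1 + measure_pmf.expectation (P a) G"
      using fin Suc.IH sub
      by (auto intro!: integral_mono_AE integrable_measure_pmf_finite simp: AE_measure_pmf_iff subset_iff)
    also have "\<dots> \<le> G a"
      using super Suc.prems False by blast
    finally show ?thesis .
  qed
qed

lemma subsolution_le_survival_sum:
  assumes closed: "\<And>a. a \<in> S \<Longrightarrow> a \<noteq> b \<Longrightarrow> finite (set_pmf (P a)) \<and> set_pmf (P a) \<subseteq> S"
    and target: "f b \<le> 0" and bounded: "\<And>a. a \<in> S \<Longrightarrow> f a \<le> U" and "0 \<le> U"
    and sub: "\<And>a. a \<in> S \<Longrightarrow> a \<noteq> b \<Longrightarrow> f a \<le> 1 + measure_pmf.expectation (P a) f"
    and "a \<in> S"
  shows "f a \<le> (\<Sum>k<n. survival P b a k) + U * survival P b a n"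
  using \<open>a \<in> S\<close>
proof (induction n arbitrary: a)
  case 0
  then show ?case using bounded target by (cases "a = b") (auto simp: survival_0)
next
  case (Suc n a)
  show ?case
  proof (cases "a = b")
    case True
    then show ?thesis using target by simp
  next
    case False
    with closed Suc.prems have fin: "finite (set_pmf (P a))" and sub': "set_pmf (P a) \<subseteq> S"
      by blast+
    have "f a \<le> 1 + measure_pmf.expectation (P a) f"
      using sub Suc.prems False by blast
    also have "\<dots> \<le> 1 + measure_pmf.expectation (P a)
                        (\<lambda>x. (\<Sum>k<n. survival P b x k) + U * survival P b x n)"
      using fin Suc.IH sub'
      by (auto intro!: integral_mono_AE integrable_measure_pmf_finite simp: AE_measure_pmf_iff subset_iff)
    also have "\<dots> = (\<Sum>k<Suc n. survival P b a k) + U * survival P b a (Suc n)"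
      using False fin
      by (simp add: survival_sum_Suc survival_Suc integrable_measure_pmf_finite del: sum.lessThan_Suc)
    finally show ?thesis .
  qed
qed

lemma expectation_shifted_square_le:
  fixes G :: "'a \<Rightarrow> real"
  assumes fin: "finite (set_pmf M)" and mean: "measure_pmf.expectation M G = g - 1"
    and jumps: "\<And>x. x \<in> set_pmf M \<Longrightarrow> \<bar>G x - g\<bar> \<le> B"
    and c: "B\<^sup>2 \<le> 2 * (g + c)"
  shows "measure_pmf.expectation M (\<lambda>x. (G x + c)\<^sup>2) \<le> (g + c)\<^sup>2"
proof -
  have "measure_pmf.expectation M (\<lambda>x. (G x + c)\<^sup>2)
        \<le> measure_pmf.expectation M (\<lambda>x. (g + c)\<^sup>2 + 2 * (g + c) * (G x - g) + B\<^sup>2)"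
  proof (intro integral_mono_AE integrable_measure_pmf_finite fin, unfold AE_measure_pmf_iff, intro ballI)
    fix x assume "x \<in> set_pmf M"
    then have "(G x - g)\<^sup>2 \<le> B\<^sup>2"
      using power_mono[OF jumps abs_ge_zero, of x 2] by simp
    then show "(G x + c)\<^sup>2 \<le> (g + c)\<^sup>2 + 2 * (g + c) * (G x - g) + B\<^sup>2"
      by (simp add: power2_eq_square algebra_simps)
  qed
  also have "\<dots> = (g + c)\<^sup>2 - 2 * (g + c) + B\<^sup>2"
    using fin by (simp add: integrable_measure_pmf_finite mean)
  also have "\<dots> \<le> (g + c)\<^sup>2"
    using c by simp
  finally show ?thesis .
qed

lemma penalized_potential_le_survival_suminf:
  assumes poisson: "\<And>a. a \<in> S \<Longrightarrow> a \<noteq> b \<Longrightarrow> poisson_at P S G B a"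
    and nonneg: "\<And>a. a \<in> S \<Longrightarrow> 0 \<le> G a" and target: "G b = 0" and "a \<in> S"
    and summable: "summable (survival P b a)"
    and "0 < e" and "0 < c" and "B\<^sup>2 \<le> 2 * c"
  shows "G a - e * (G a + c)\<^sup>2 \<le> (\<Sum>n. survival P b a n)"
proof -
  define f where "f x = G x - e * (G x + c)\<^sup>2" for x
  have bound: "f a \<le> (\<Sum>k<n. survival P b a k) + 1 / (4 * e) * survival P b a n" for n
  proof (rule subsolution_le_survival_sum[where S = S])
    show "f b \<le> 0" "0 \<le> 1 / (4 * e)"
      using \<open>0 < e\<close> \<open>0 < c\<close> by (simp_all add: f_def target)
  next
    fix x assume "x \<in> S"
    have "e * (G x)\<^sup>2 \<le> e * (G x + c)\<^sup>2"
      using nonneg[OF \<open>x \<in> S\<close>] \<open>0 < e\<close> \<open>0 < c\<close> by (intro mult_left_mono power_mono) auto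
    moreover have "1 / (4 * e) - (G x - e * (G x)\<^sup>2) = (2 * e * G x - 1)\<^sup>2 / (4 * e)"
      using \<open>0 < e\<close> by (simp add: field_simps power2_eq_square)
    moreover have "0 \<le> (2 * e * G x - 1)\<^sup>2 / (4 * e)"
      using \<open>0 < e\<close> by simp
    ultimately show "f x \<le> 1 / (4 * e)"
      unfolding f_def by linarith
    assume "x \<noteq> b"
    with poisson \<open>x \<in> S\<close> have fin: "finite (set_pmf (P x))"
      and mean: "measure_pmf.expectation (P x) G = G x - 1"
      and jumps: "\<And>z. z \<in> set_pmf (P x) \<Longrightarrow> \<bar>G z - G x\<bar> \<le> B"
      by (auto simp: poisson_at_def)
    have "measure_pmf.expectation (P x) (\<lambda>z. (G z + c)\<^sup>2) \<le> (G x + c)\<^sup>2"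
      using nonneg[OF \<open>x \<in> S\<close>] \<open>B\<^sup>2 \<le> 2 * c\<close>
      by (intro expectation_shifted_square_le[OF fin mean jumps]) auto
    then have "e * measure_pmf.expectation (P x) (\<lambda>z. (G z + c)\<^sup>2) \<le> e * (G x + c)\<^sup>2"
      using \<open>0 < e\<close> by simp
    moreover have "measure_pmf.expectation (P x) f
        = measure_pmf.expectation (P x) G - e * measure_pmf.expectation (P x) (\<lambda>z. (G z + c)\<^sup>2)"
      unfolding f_def using fin by (simp add: integrable_measure_pmf_finite)
    ultimately show "f x \<le> 1 + measure_pmf.expectation (P x) f"
      unfolding mean by (simp add: f_def)
  qed (use poisson \<open>a \<in> S\<close> in \<open>auto simp: poisson_at_def\<close>)
  have "(\<lambda>n. (\<Sum>k<n. survival P b a k) + 1 / (4 * e) * survival P b a n)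
          \<longlonglongrightarrow> (\<Sum>n. survival P b a n) + 1 / (4 * e) * 0"
    by (intro tendsto_intros summable_LIMSEQ summable summable_LIMSEQ_zero)
  then have "f a \<le> (\<Sum>n. survival P b a n) + 1 / (4 * e) * 0"
    by (rule LIMSEQ_le_const) (use bound in blast)
  then show ?thesis
    by (simp add: f_def)
qed

theorem survival_suminf_eq_potential:
  assumes poisson: "\<And>a. a \<in> S \<Longrightarrow> a \<noteq> b \<Longrightarrow> poisson_at P S G B a"
    and nonneg: "\<And>a. a \<in> S \<Longrightarrow> 0 \<le> G a" and target: "G b = 0" and "a \<in> S"
  shows "(\<Sum>n. ennreal (survival P b a n)) = ennreal (G a)"
proof -
  have partial_le: "(\<Sum>k<n. survival P b a k) \<le> G a" for n
    using poisson nonneg \<open>a \<in> S\<close>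
    by (intro survival_sum_le_supersolution[where S = S]) (auto simp: poisson_at_def)
  then have summable: "summable (survival P b a)"
    by (intro summableI_nonneg_bounded survival_nonneg)
  define c where "c = B\<^sup>2 / 2 + 1"
  have "0 < c" "B\<^sup>2 \<le> 2 * c"
    by (simp_all add: c_def add_nonneg_pos)
  have "G a \<le> (\<Sum>n. survival P b a n) + d" if "0 < d" for d
  proof -
    have "0 < (G a + c)\<^sup>2"
      using nonneg[OF \<open>a \<in> S\<close>] \<open>0 < c\<close> by simp
    with that have "G a - d / (G a + c)\<^sup>2 * (G a + c)\<^sup>2 \<le> (\<Sum>n. survival P b a n)"
      by (intro penalized_potential_le_survival_suminf[OF poisson nonneg target \<open>a \<in> S\<close>
            summable _ \<open>0 < c\<close> \<open>B\<^sup>2 \<le> 2 * c\<close>]) auto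
    with \<open>0 < (G a + c)\<^sup>2\<close> show ?thesis by simp
  qed
  then have "G a \<le> (\<Sum>n. survival P b a n)"
    by (rule field_le_epsilon)
  with suminf_le_const[OF summable partial_le] have "(\<Sum>n. survival P b a n) = G a"
    by (rule antisym)
  with suminf_ennreal2[OF survival_nonneg summable] show ?thesis
    by simp
qed

section \<open>The drop-and-shuffle chain\<close>

lemma stopped_walk_eq_stopped_chain: "stopped_walk r pd b a n = stopped_chain (K r pd) b a n"
proof -
  have "stop_step r pd b = (\<lambda>x. if x = b then return_pmf b else K r pd x)"
    by (simp add: stop_step_def fun_eq_iff)
  then show ?thesis
    by (induction n) simp_all
qed

lemma mean_hit_eq_survival_suminf: "mean_hit r pd a b = (\<Sum>n. ennreal (survival (K r pd) b a n))"
  by (simp add: mean_hit_def survival_def stopped_walk_eq_stopped_chain)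

lemma trans_prob_nonneg: "0 \<le> pd \<Longrightarrow> pd \<le> 1 \<Longrightarrow> 0 \<le> trans_prob r pd s z"
  by (cases s; cases z) (auto split: list.splits prod.splits)

lemma K_finite_support:
  assumes "finite A" and support: "\<And>z. trans_prob r pd a z \<noteq> 0 \<Longrightarrow> z \<in> A"
    and nonneg: "\<And>z. 0 \<le> trans_prob r pd a z" and total: "(\<Sum>z\<in>A. trans_prob r pd a z) = 1"
  shows "set_pmf (K r pd a) \<subseteq> A"
    and "measure_pmf.expectation (K r pd a) f = (\<Sum>z\<in>A. trans_prob r pd a z * f z)"
proof -
  have "(\<integral>\<^sup>+z. ennreal (trans_prob r pd a z) \<partial>count_space UNIV) = (\<Sum>z\<in>A. ennreal (trans_prob r pd a z))"
    using \<open>finite A\<close> support by (intro nn_integral_count_space') (auto, metis ennreal_0)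
  also have "\<dots> = 1"
    using total nonneg by simp
  finally have integral: "(\<integral>\<^sup>+z. ennreal (trans_prob r pd a z) \<partial>count_space UNIV) = 1" .
  have pmf: "pmf (K r pd a) z = trans_prob r pd a z" for z
    unfolding K_def by (rule pmf_embed_pmf[OF nonneg integral])
  show "set_pmf (K r pd a) \<subseteq> A"
    using support by (auto simp: set_pmf_eq pmf)
  then show "measure_pmf.expectation (K r pd a) f = (\<Sum>z\<in>A. trans_prob r pd a z * f z)"
    using \<open>finite A\<close> by (subst integral_measure_pmf_real[of A]) (auto simp: pmf mult.commute)
qed

lemma poisson_at_K:
  assumes "0 \<le> pd" "pd \<le> 1" and "finite A" and "A \<subseteq> S"
    and support: "\<And>z. trans_prob r pd a z \<noteq> 0 \<Longrightarrow> z \<in> A"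
    and total: "(\<Sum>z\<in>A. trans_prob r pd a z) = 1"
    and band: "\<And>z. z \<in> insert a A \<Longrightarrow> C \<le> G z \<and> G z \<le> C + B"
    and mean: "(\<Sum>z\<in>A. trans_prob r pd a z * G z) = G a - 1"
  shows "poisson_at (K r pd) S G B a"
proof -
  note K = K_finite_support[OF \<open>finite A\<close> support trans_prob_nonneg[OF \<open>0 \<le> pd\<close> \<open>pd \<le> 1\<close>] total]
  have "\<bar>G z - G a\<bar> \<le> B" if "z \<in> set_pmf (K r pd a)" for z
    using that K(1) band[of z] band[of a] by (auto simp: abs_le_iff)
  with K \<open>finite A\<close> \<open>A \<subseteq> S\<close> mean show ?thesis
    by (auto simp: poisson_at_def intro: finite_subset)
qed

lemma card_distinct_lists_length:
  assumes "l \<le> r"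
  shows "card {xs. length xs = l \<and> distinct xs \<and> set xs \<subseteq> {1..r::nat}} = fact l * (r choose l)"
proof -
  have "fact (r - l) * (fact l * (r choose l)) = (fact (r - l) * \<Prod>{r - l + 1..r} :: nat)"
    using binomial_fact_lemma[OF assms] fact_eq_fact_times[of "r - l" r] by (simp add: algebra_simps)
  then have "fact l * (r choose l) = \<Prod>{r - l + 1..r}"
    by simp
  with assms show ?thesis
    by (simp add: card_lists_distinct_length_eq)
qed

lemma valid_com_length: "valid_com r y \<Longrightarrow> 1 \<le> length y \<and> length y \<le> r"
proof -
  assume valid: "valid_com r y"
  then have "length y = card (set y)"
    by (simp add: valid_com_def distinct_card)
  also have "\<dots> \<le> card {1..r}"
    using valid unfolding valid_com_def by (intro card_mono) auto
  finally show ?thesis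
    using valid by (simp add: valid_com_def Suc_le_eq)
qed

lemma finite_valid_com: "finite {y. valid_com r y}"
proof (rule finite_subset)
  show "{y. valid_com r y} \<subseteq> {xs. set xs \<subseteq> {1..r} \<and> length xs \<le> r}"
    using valid_com_length unfolding valid_com_def by auto
qed (simp add: finite_lists_length_le)

lemma sum_valid_com_by_length:
  fixes h :: "nat \<Rightarrow> real"
  shows "(\<Sum>y | valid_com r y. h (length y)) = (\<Sum>l = 1..r. real (fact l * (r choose l)) * h l)"
proof -
  have "(\<Sum>y | valid_com r y. h (length y))
        = (\<Sum>l = 1..r. \<Sum>y \<in> {y. valid_com r y \<and> length y = l}. h l)"
    by (subst sum.group[symmetric, where g = length and T = "{1..r}"])
       (auto simp: finite_valid_com dest!: valid_com_length intro!: sum.cong)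
  also have "\<dots> = (\<Sum>l = 1..r. real (fact l * (r choose l)) * h l)"
  proof (rule sum.cong[OF refl])
    fix l assume l: "l \<in> {1..r}"
    then have "{y. valid_com r y \<and> length y = l}
               = {xs. length xs = l \<and> distinct xs \<and> set xs \<subseteq> {1..r}}"
      by (auto simp: valid_com_def)
    with l card_distinct_lists_length[of l r]
    show "(\<Sum>y \<in> {y. valid_com r y \<and> length y = l}. h l) = real (fact l * (r choose l)) * h l"
      by simp
  qed
  finally show ?thesis .
qed

text \<open>The number l of kept clauses is binomially distributed with parameters r and 1 - pd, and
  the kept clauses are shuffled into one of l! equally likely orders.\<close>

definition com_prob :: "nat \<Rightarrow> real \<Rightarrow> nat list \<Rightarrow> real" where
  "com_prob r pd y = pd ^ (r - length y) * (1 - pd) ^ length y / fact (length y)"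

lemma sum_com_prob: "(\<Sum>y | valid_com r y. com_prob r pd y) = 1 - pd ^ r"
proof -
  have "(\<Sum>y | valid_com r y. com_prob r pd y)
        = (\<Sum>l = 1..r. real (fact l * (r choose l)) * (pd ^ (r - l) * (1 - pd) ^ l / fact l))"
    unfolding com_prob_def by (rule sum_valid_com_by_length)
  also have "\<dots> = (\<Sum>l = 1..r. real (r choose l) * (1 - pd) ^ l * pd ^ (r - l))"
    by (rule sum.cong) (auto simp: field_simps)
  also have "\<dots> = (\<Sum>l\<le>r. real (r choose l) * (1 - pd) ^ l * pd ^ (r - l)) - pd ^ r"
    by (simp add: atMost_atLeast0 sum.atLeast_Suc_atMost)
  also have "\<dots> = ((1 - pd) + pd) ^ r - pd ^ r"
    using binomial_ring[of "1 - pd" pd r] by simp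
  finally show ?thesis
    by simp
qed

lemma sum_length_com_prob:
  "(\<Sum>y | valid_com r y. real (length y) * com_prob r pd y) = real r * (1 - pd)"
proof (cases r)
  case 0
  then have "{y. valid_com r y} = {}"
    by (auto simp: valid_com_def)
  with 0 show ?thesis
    by simp
next
  case (Suc r')
  have "(\<Sum>y | valid_com r y. real (length y) * com_prob r pd y)
        = (\<Sum>l = 1..r. real (fact l * (r choose l)) * (real l * (pd ^ (r - l) * (1 - pd) ^ l / fact l)))"
    unfolding com_prob_def by (rule sum_valid_com_by_length)
  also have "\<dots> = (\<Sum>l = Suc 0..Suc r'. real (l * (Suc r' choose l)) * (1 - pd) ^ l * pd ^ (Suc r' - l))"
    unfolding Suc by (rule sum.cong) (auto simp: field_simps)
  also have "\<dots> = (\<Sum>k = 0..r'. real (Suc k * (Suc r' choose Suc k)) * (1 - pd) ^ Suc k * pd ^ (r' - k))"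
    by (subst sum.shift_bounds_cl_Suc_ivl) simp
  also have "\<dots> = (\<Sum>k = 0..r'. real (Suc r') * (1 - pd) * (real (r' choose k) * (1 - pd) ^ k * pd ^ (r' - k)))"
    by (rule sum.cong[OF refl], subst Suc_times_binomial) (simp add: algebra_simps)
  also have "\<dots> = real (Suc r') * (1 - pd) * ((1 - pd) + pd) ^ r'"
    using binomial_ring[of "1 - pd" pd r'] by (simp add: atMost_atLeast0 flip: sum_distrib_left)
  finally show ?thesis
    using Suc by simp
qed

subsection \<open>An explicit potential for excursions\<close>

lemma pop_word_Word_length: "pop_word w = Word w' \<Longrightarrow> length w' \<le> length w \<and> w' \<noteq> w"
  by (induction w arbitrary: w' rule: pop_word.induct) (auto split: sel.splits)

lemma pop_word_Partial_length: "pop_word w = Partial w' x \<Longrightarrow> length w' < length w"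
  by (induction w arbitrary: w' x rule: pop_word.induct) (auto split: sel.splits)

lemma pop_word_neq [simp]:
  "Partial w x \<noteq> pop_word w" "pop_word w \<noteq> Partial w x"
  "Word ((x', y) # w) \<noteq> pop_word w" "pop_word w \<noteq> Word ((x', y) # w)"
  "Word (v @ w) \<noteq> pop_word w" "Partial (v @ w) x \<noteq> pop_word w"
  using pop_word_Word_length[of w "(x', y) # w"] pop_word_Partial_length[of w w x]
    pop_word_Word_length[of w "v @ w"] pop_word_Partial_length[of w "v @ w" x]
  by auto

definition pushed :: "(sel \<times> nat list) list \<Rightarrow> bool" where
  "pushed v \<longleftrightarrow> (\<forall>(x, y) \<in> set v. (x = SHT \<or> x = SHTNil) \<and> y \<noteq> [])"

lemma pushed_Nil [simp]: "pushed []"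
  by (simp add: pushed_def)

lemma pushed_Cons [simp]: "pushed ((x, y) # v) \<longleftrightarrow> (x = SHT \<or> x = SHTNil) \<and> y \<noteq> [] \<and> pushed v"
  by (auto simp: pushed_def)

text \<open>Expected remaining times, given that a sub-tree takes time m on average: a pushed pair
  (x, y) still owes |y| - 1 sibling sub-trees, plus one step for the [] branch of [H|T][]; a
  partial state w.x owes the remaining branches of x, each [H|T] branch spawning r(1 - pd)
  sub-trees on average.\<close>

fun pending_time :: "real \<Rightarrow> (sel \<times> nat list) list \<Rightarrow> real" where
  "pending_time m [] = 0"
| "pending_time m ((x, y) # v) =
     (real (length y) - 1) * m + (if x = SHTNil then 1 else 0) + pending_time m v"

definition partial_time :: "nat \<Rightarrow> real \<Rightarrow> real \<Rightarrow> sel \<Rightarrow> real" where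
  "partial_time r pd m x = (case x of
       SNil \<Rightarrow> 1
     | SHT \<Rightarrow> 1 + r * (1 - pd) * m
     | SHTNil \<Rightarrow> 2 + r * (1 - pd) * m
     | SNilHT \<Rightarrow> 2 + r * (1 - pd) * m)"

text \<open>Words are stored reversed, so v @ u is u extended by the pairs of v.\<close>

definition excursion_states :: "(sel \<times> nat list) list \<Rightarrow> state set" where
  "excursion_states u =
     insert (pop_word u) ({Word (v @ u) | v. pushed v} \<union> {Partial (v @ u) x | v x. pushed v})"

definition excursion_potential :: "nat \<Rightarrow> real \<Rightarrow> real \<Rightarrow> (sel \<times> nat list) list \<Rightarrow> state \<Rightarrow> real" where
  "excursion_potential r pd m u a = (if a = pop_word u then 0 else
     (case a of
        Word w \<Rightarrow> m + pending_time m (take (length w - length u) w)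
      | Partial w x \<Rightarrow> partial_time r pd m x + pending_time m (take (length w - length u) w)
      | Bot \<Rightarrow> 0))"

lemma excursion_potential_Word: "excursion_potential r pd m u (Word (v @ u)) = m + pending_time m v"
  by (simp add: excursion_potential_def)

lemma excursion_potential_Partial:
  "excursion_potential r pd m u (Partial (v @ u) x) = partial_time r pd m x + pending_time m v"
  by (simp add: excursion_potential_def)

lemma pending_time_nonneg: "pushed v \<Longrightarrow> 0 \<le> m \<Longrightarrow> 0 \<le> pending_time m v"
proof (induction v)
  case (Cons p v)
  then obtain x y where "p = (x, y)" "y \<noteq> []" "pushed v"
    by (cases p) auto
  with Cons show ?case
    by (cases y) auto
qed simp

lemma partial_time_bounds:
  assumes "0 \<le> pd" "pd \<le> 1" "0 \<le> m"
  shows "1 \<le> partial_time r pd m x \<and> partial_time r pd m x \<le> 2 + r * m"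
proof -
  have "r * (1 - pd) * m \<le> r * m"
    using assms by (intro mult_right_mono) (auto simp: mult_left_le)
  moreover have "0 \<le> r * (1 - pd) * m"
    using assms by simp
  ultimately show ?thesis
    by (cases x) (auto simp: partial_time_def)
qed

lemma Word_in_excursion_states: "pushed v \<Longrightarrow> Word (v @ u) \<in> excursion_states u"
  by (auto simp: excursion_states_def)

lemma Partial_in_excursion_states: "pushed v \<Longrightarrow> Partial (v @ u) x \<in> excursion_states u"
  by (auto simp: excursion_states_def)

lemma pop_word_pushed:
  assumes "pushed v"
  shows "pop_word (v @ u) \<in> excursion_states u
    \<and> excursion_potential r pd m u (pop_word (v @ u)) = pending_time m v"
  using assms
proof (induction v)
  case Nil
  then show ?case
    by (simp add: excursion_states_def excursion_potential_def)
next
  case (Cons p v)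
  then obtain x y1 ys where p: "p = (x, y1 # ys)" and x: "x = SHT \<or> x = SHTNil" and "pushed v"
    by (cases p; metis neq_Nil_conv pushed_Cons)
  show ?case
  proof (cases ys)
    case Nil
    with Cons.IH \<open>pushed v\<close> x show ?thesis
      by (auto simp: p excursion_potential_Partial partial_time_def Partial_in_excursion_states)
  next
    case (Cons y2 zs)
    with \<open>pushed v\<close> x have "pushed ((x, y2 # zs) # v)"
      by simp
    from Word_in_excursion_states[OF this] show ?thesis
      by (simp add: p Cons excursion_potential_Word[of _ _ _ _ "(x, y2 # zs) # v", simplified]
          algebra_simps)
  qed
qed

lemma poisson_at_Word:
  fixes m :: real
  assumes "0 \<le> pd" "pd \<le> 1" "0 \<le> m" and fixpoint: "m = 1 + 2 * (1 - pd) + r * (1 - pd)\<^sup>2 * m"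
    and "pushed v"
  shows "poisson_at (K r pd) (excursion_states u) (excursion_potential r pd m u)
           ((real r + 1) * m + 2) (Word (v @ u))"
proof -
  define w where "w = v @ u"
  define A where "A = {Partial w SHTNil, Partial w SNilHT, Partial w SNil, Partial w SHT, pop_word w}"
  define C where "C = pending_time m v"
  define B where "B = (real r + 1) * m + 2"
  let ?G = "excursion_potential r pd m u"
  have pop: "pop_word w \<in> excursion_states u" "?G (pop_word w) = C"
    using pop_word_pushed[OF \<open>pushed v\<close>] by (simp_all add: w_def C_def)
  have partial: "?G (Partial w x) = partial_time r pd m x + C" for x
    by (simp add: w_def C_def excursion_potential_Partial)
  have word: "?G (Word w) = m + C"
    by (simp add: w_def C_def excursion_potential_Word)
  have partial_band: "C \<le> ?G (Partial w x) \<and> ?G (Partial w x) \<le> C + B" for x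
    using partial_time_bounds[OF assms(1-3), of r x] \<open>0 \<le> m\<close> by (simp add: partial B_def algebra_simps)
  have "0 \<le> B"
    using \<open>0 \<le> m\<close> by (simp add: B_def)
  have word_band: "C \<le> ?G (Word w) \<and> ?G (Word w) \<le> C + B"
    using \<open>0 \<le> m\<close> by (simp add: word B_def algebra_simps)
  show ?thesis
    unfolding w_def[symmetric] B_def[symmetric]
  proof (rule poisson_at_K[where A = A and C = C])
    show "finite A" "A \<subseteq> excursion_states u"
      using pop Partial_in_excursion_states[OF \<open>pushed v\<close>] by (auto simp: A_def w_def)
    show "z \<in> A" if "trans_prob r pd (Word w) z \<noteq> 0" for z
      using that by (auto simp: A_def split: if_splits)
    show "(\<Sum>z\<in>A. trans_prob r pd (Word w) z) = 1"
      by (simp add: A_def power2_eq_square algebra_simps)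
    have "(\<Sum>z\<in>A. trans_prob r pd (Word w) z * ?G z) = C + 2 * (1 - pd) + r * (1 - pd)\<^sup>2 * m"
      by (simp add: A_def pop partial partial_time_def power2_eq_square algebra_simps)
    then show "(\<Sum>z\<in>A. trans_prob r pd (Word w) z * ?G z) = ?G (Word w) - 1"
      using fixpoint by (simp add: word)
    show "C \<le> ?G z \<and> ?G z \<le> C + B" if "z \<in> insert (Word w) A" for z
      using that \<open>0 \<le> B\<close> by (auto simp: A_def pop word_band partial_band)
  qed fact+
qed

definition HT_successors :: "nat \<Rightarrow> (sel \<times> nat list) list \<Rightarrow> sel \<Rightarrow> state set" where
  "HT_successors r w x = insert (Pop (Partial w x)) ((\<lambda>y. Word ((x, y) # w)) ` {y. valid_com r y})"

lemma finite_HT_successors: "finite (HT_successors r w x)"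
  by (simp add: HT_successors_def finite_valid_com)

lemma trans_prob_Partial_HT_support:
  "x = SHT \<or> x = SHTNil \<Longrightarrow> trans_prob r pd (Partial w x) z \<noteq> 0 \<Longrightarrow> z \<in> HT_successors r w x"
  by (cases z) (auto simp: HT_successors_def split: list.splits if_splits)

lemma sum_HT_successors:
  fixes F :: "state \<Rightarrow> real"
  assumes "x = SHT \<or> x = SHTNil"
  shows "(\<Sum>z\<in>HT_successors r w x. trans_prob r pd (Partial w x) z * F z)
    = (\<Sum>y | valid_com r y. com_prob r pd y * F (Word ((x, y) # w))) + pd ^ r * F (Pop (Partial w x))"
proof -
  have Pop_neq: "Pop (Partial w x) \<noteq> Word ((x', y) # w)" for x' y
    using assms by auto
  have "trans_prob r pd (Partial w x) (Word ((x, y) # w)) = com_prob r pd y" if "valid_com r y" for y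
    using that assms Pop_neq by (auto simp: com_prob_def)
  moreover have "trans_prob r pd (Partial w x) (Pop (Partial w x)) = pd ^ r"
    using assms by (cases "Pop (Partial w x)") (auto split: list.splits)
  ultimately show ?thesis
    using Pop_neq finite_valid_com[of r] unfolding HT_successors_def
    by (subst sum.insert) (auto simp: sum.reindex inj_on_def add.commute simp del: trans_prob.simps)
qed

lemma poisson_at_Partial_HT:
  fixes m :: real
  assumes "0 \<le> pd" "pd \<le> 1" "0 \<le> m" and x: "x = SHT \<or> x = SHTNil" and "pushed v"
  shows "poisson_at (K r pd) (excursion_states u) (excursion_potential r pd m u)
           ((real r + 1) * m + 2) (Partial (v @ u) x)"
proof -
  define w where "w = v @ u"
  define C where "C = pending_time m v"
  define R where "R = (if x = SHTNil then 1 else (0::real))"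
  define B where "B = (real r + 1) * m + 2"
  let ?G = "excursion_potential r pd m u"
  have Pop: "Pop (Partial w x) \<in> excursion_states u \<and> ?G (Pop (Partial w x)) = R + C"
    using x pop_word_pushed[OF \<open>pushed v\<close>] Partial_in_excursion_states[OF \<open>pushed v\<close>]
    by (auto simp: w_def C_def R_def excursion_potential_Partial partial_time_def)
  have word: "?G (Word ((x, y) # w)) = real (length y) * m + R + C" for y
    using excursion_potential_Word[of r pd m u "(x, y) # v"] by (simp add: w_def C_def R_def algebra_simps)
  have partial: "?G (Partial w x) = partial_time r pd m x + C"
    by (simp add: w_def C_def excursion_potential_Partial)
  show ?thesis
    unfolding w_def[symmetric] B_def[symmetric]
  proof (rule poisson_at_K[where A = "HT_successors r w x" and C = C])
    show "HT_successors r w x \<subseteq> excursion_states u"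
      using Pop x \<open>pushed v\<close> Word_in_excursion_states[of "(x, _) # v" u]
      by (auto simp: HT_successors_def w_def valid_com_def)
    show "(\<Sum>z\<in>HT_successors r w x. trans_prob r pd (Partial w x) z) = 1"
      using sum_HT_successors[OF x, where F = "\<lambda>_. 1"] by (simp add: sum_com_prob)
    have "(\<Sum>z\<in>HT_successors r w x. trans_prob r pd (Partial w x) z * ?G z)
          = m * (\<Sum>y | valid_com r y. real (length y) * com_prob r pd y)
            + (R + C) * (\<Sum>y | valid_com r y. com_prob r pd y) + pd ^ r * (R + C)"
      unfolding sum_HT_successors[OF x]
      by (simp add: Pop word sum_distrib_left sum.distrib algebra_simps)
    also have "\<dots> = ?G (Partial w x) - 1"
      using x by (auto simp: sum_com_prob sum_length_com_prob partial R_def partial_time_def algebra_simps)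
    finally show "(\<Sum>z\<in>HT_successors r w x. trans_prob r pd (Partial w x) z * ?G z) = ?G (Partial w x) - 1" .
    have word_band: "C \<le> ?G (Word ((x, y) # w)) \<and> ?G (Word ((x, y) # w)) \<le> C + B"
      if "valid_com r y" for y
    proof -
      have "real (length y) * m \<le> real r * m"
        using that \<open>0 \<le> m\<close> valid_com_length by (auto intro: mult_right_mono)
      then show ?thesis
        using \<open>0 \<le> m\<close> by (simp add: word R_def B_def algebra_simps)
    qed
    have "C \<le> ?G (Partial w x) \<and> ?G (Partial w x) \<le> C + B"
      using partial_time_bounds[OF assms(1-3), of r x] \<open>0 \<le> m\<close> by (simp add: partial B_def algebra_simps)
    moreover have "C \<le> ?G (Pop (Partial w x)) \<and> ?G (Pop (Partial w x)) \<le> C + B"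
      using Pop \<open>0 \<le> m\<close> by (simp add: R_def B_def)
    ultimately show "C \<le> ?G z \<and> ?G z \<le> C + B" if "z \<in> insert (Partial w x) (HT_successors r w x)" for z
      using that word_band by (auto simp: HT_successors_def)
  qed (use assms finite_HT_successors trans_prob_Partial_HT_support in auto)
qed

lemma poisson_at_Partial_Nil:
  fixes m :: real
  assumes "0 \<le> pd" "pd \<le> 1" "0 \<le> m" and x: "x = SNil \<or> x = SNilHT" and "pushed v"
  shows "poisson_at (K r pd) (excursion_states u) (excursion_potential r pd m u)
           ((real r + 1) * m + 2) (Partial (v @ u) x)"
proof -
  define w where "w = v @ u"
  define C where "C = pending_time m v"
  define B where "B = (real r + 1) * m + 2"
  let ?G = "excursion_potential r pd m u"
  have partial: "?G (Partial w x') = partial_time r pd m x' + C" for x'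
    by (simp add: w_def C_def excursion_potential_Partial)
  have Pop: "Pop (Partial w x) \<in> excursion_states u \<and> ?G (Pop (Partial w x)) = ?G (Partial w x) - 1"
    using x pop_word_pushed[OF \<open>pushed v\<close>] Partial_in_excursion_states[OF \<open>pushed v\<close>]
    by (auto simp: w_def C_def excursion_potential_Partial partial_time_def)
  have trans_Pop: "trans_prob r pd (Partial w x) (Pop (Partial w x)) = 1"
    using x by auto
  show ?thesis
    unfolding w_def[symmetric] B_def[symmetric]
  proof (rule poisson_at_K[where A = "{Pop (Partial w x)}" and C = C])
    show "z \<in> {Pop (Partial w x)}" if "trans_prob r pd (Partial w x) z \<noteq> 0" for z
      using that x by (auto split: if_splits)
    show "C \<le> ?G z \<and> ?G z \<le> C + B" if "z \<in> insert (Partial w x) {Pop (Partial w x)}" for z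
      using that Pop partial_time_bounds[OF assms(1-3), of r x] \<open>0 \<le> m\<close>
      by (auto simp: partial B_def algebra_simps)
  qed (use Pop trans_Pop assms in auto)
qed

lemma poisson_at_excursion_states:
  fixes m :: real
  assumes "0 \<le> pd" "pd \<le> 1" "0 \<le> m" and fixpoint: "m = 1 + 2 * (1 - pd) + r * (1 - pd)\<^sup>2 * m"
    and "a \<in> excursion_states u" "a \<noteq> pop_word u"
  shows "poisson_at (K r pd) (excursion_states u) (excursion_potential r pd m u) ((real r + 1) * m + 2) a"
proof -
  from assms(5,6) consider v where "pushed v" "a = Word (v @ u)"
    | v x where "pushed v" "a = Partial (v @ u) x" "x = SHT \<or> x = SHTNil"
    | v x where "pushed v" "a = Partial (v @ u) x" "x = SNil \<or> x = SNilHT"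
    by (auto simp: excursion_states_def) (metis sel.exhaust)
  then show ?thesis
  proof cases
    case 1
    then show ?thesis
      using poisson_at_Word[OF assms(1-4)] by simp
  next
    case 2
    then show ?thesis
      using poisson_at_Partial_HT[OF assms(1-3)] by simp
  next
    case 3
    then show ?thesis
      using poisson_at_Partial_Nil[OF assms(1-3)] by simp
  qed
qed

lemma excursion_potential_nonneg:
  assumes "0 \<le> pd" "pd \<le> 1" "0 \<le> m" and "a \<in> excursion_states u"
  shows "0 \<le> excursion_potential r pd m u a"
proof -
  from assms(4) consider "a = pop_word u"
    | v where "pushed v" "a = Word (v @ u)"
    | v x where "pushed v" "a = Partial (v @ u) x"
    by (auto simp: excursion_states_def)
  then show ?thesis
  proof cases
    case 1
    then show ?thesis
      by (simp add: excursion_potential_def)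
  next
    case (2 v)
    then show ?thesis
      using pending_time_nonneg[OF _ \<open>0 \<le> m\<close>] \<open>0 \<le> m\<close> by (simp add: excursion_potential_Word)
  next
    case (3 v x)
    then show ?thesis
      using pending_time_nonneg[OF _ \<open>0 \<le> m\<close>] partial_time_bounds[OF assms(1-3), of r x]
      by (simp add: excursion_potential_Partial)
  qed
qed

lemma mean_hit_pop_word:
  fixes m :: real
  assumes "0 \<le> pd" "pd \<le> 1" "0 \<le> m" and fixpoint: "m = 1 + 2 * (1 - pd) + r * (1 - pd)\<^sup>2 * m"
  shows "mean_hit r pd (Word u) (pop_word u) = ennreal m"
proof -
  have root: "Word u \<in> excursion_states u"
    using Word_in_excursion_states[of "[]" u] by simp
  have "mean_hit r pd (Word u) (pop_word u) = ennreal (excursion_potential r pd m u (Word u))"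
    unfolding mean_hit_eq_survival_suminf
  proof (rule survival_suminf_eq_potential[where S = "excursion_states u" and B = "(real r + 1) * m + 2"])
    show "poisson_at (K r pd) (excursion_states u) (excursion_potential r pd m u) ((real r + 1) * m + 2) a"
      if "a \<in> excursion_states u" "a \<noteq> pop_word u" for a
      using poisson_at_excursion_states[OF assms that] .
    show "0 \<le> excursion_potential r pd m u a" if "a \<in> excursion_states u" for a
      using excursion_potential_nonneg[OF assms(1-3) that] .
    show "excursion_potential r pd m u (pop_word u) = 0"
      by (simp add: excursion_potential_def)
  qed (rule root)
  also have "excursion_potential r pd m u (Word u) = m"
    using excursion_potential_Word[of r pd m u "[]"] by simp
  finally show ?thesis .
qed

lemma subcritical_drop_probability:
  assumes "r \<ge> 1" and "1 - 1 / sqrt (real r) < pd" and "pd \<le> 1"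
  shows "0 \<le> pd" and "real r * (1 - pd)\<^sup>2 < 1"
proof -
  have "1 / sqrt (real r) \<le> 1"
    using \<open>r \<ge> 1\<close> by simp
  with assms(2) show "0 \<le> pd"
    by simp
  have "(1 - pd)\<^sup>2 < (1 / sqrt (real r))\<^sup>2"
    using assms(2,3) by (intro power_strict_mono) auto
  also have "\<dots> = 1 / real r"
    using \<open>r \<ge> 1\<close> by (simp add: power_divide)
  finally show "real r * (1 - pd)\<^sup>2 < 1"
    using \<open>r \<ge> 1\<close> by (simp add: field_simps)
qed

theorem theorem3p8:
  fixes r :: nat and pd :: real
  assumes "r \<ge> 1" and "1 - 1 / sqrt (real r) < pd" and "pd \<le> 1"
  shows "mean_hit r pd eps Bot < \<infinity>
    \<and> mean_hit r pd eps Bot = ennreal ((1 + 2 * (1 - pd)) / (1 - real r * (1 - pd)^2))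
    \<and> (\<forall>s. rec_root r s \<longrightarrow> mean_hit r pd s (Pop s) = mean_hit r pd eps Bot)"
proof -
  note pd = subcritical_drop_probability[OF assms]
  define m where "m = (1 + 2 * (1 - pd)) / (1 - real r * (1 - pd)\<^sup>2)"
  have "0 \<le> m"
    using pd assms(3) by (simp add: m_def)
  moreover have "m = 1 + 2 * (1 - pd) + r * (1 - pd)\<^sup>2 * m"
    using pd(2) by (simp add: m_def field_simps)
  ultimately have hit: "mean_hit r pd (Word u) (pop_word u) = ennreal m" for u
    using mean_hit_pop_word pd(1) assms(3) by blast
  have eps: "mean_hit r pd eps Bot = ennreal m"
    using hit[of "[]"] by (simp add: eps_def)
  moreover have "mean_hit r pd s (Pop s) = mean_hit r pd eps Bot" if "rec_root r s" for s
    using that hit eps by (auto simp: rec_root_def)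
  ultimately show ?thesis
    unfolding m_def by simp
qed

end
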